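(* Let $0<p<1-1/e^2$ be constant, $b=\frac1{1-p}$, and $\gamma(n)=2\log_b n-2\log_b\log_b n-2\log_b 2$. Let $k=k(n)$ be positive integers with $\frac nk-\gamma(n)=O(1)$. Then, as $n\to\infty$, \[\frac{\bar\mu_{n,k+1}}{\bar\mu_{n,k}}\ge\exp\big(\Theta(\log n\log\log n)\big),\] i.e., there is a constant $C>0$ such that for large $n$ the ratio is at least $\exp(C\log n\log\log n)$.
   Context: For $n\in\mathbb{N}$ let $m(n)=\lfloor p\binom n2\rfloor$ and $G\sim\mathcal{G}(n,m(n))$, the uniform random graph on $n$ labelled vertices with exactly $m(n)$ edges. An ordered $k$-equipartition of $[n]$ is an ordered partition into $k$ parts each of size $\lceil n/k\rceil$ or $\lfloor n/k\rfloor$, the larger parts listed first. Let $k_{\mathrm L}=n-k\lfloor n/k\rfloor$ (number of parts of size $\lceil n/k\rceil$) and $k_{\mathrm S}=k-k_{\mathrm L}$. Let $X_{n,k}$ be the number of ordered $k$-equipartitions all of whose parts are independent in $G$, $\mu_{n,k}=\mathbb{E}[X_{n,k}]$ and $\bar\mu_{n,k}=\mu_{n,k}/(k_{\mathrm L}!\,k_{\mathrm S}!)$ (with $k_{\mathrm L},k_{\mathrm S}$ computed for the respective $k$). *)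

theory Defs
  imports "HOL-Probability.Probability" "HOL-Library.Landau_Symbols"
begin

definition all_edges :: "nat \<Rightarrow> nat set set" where
  "all_edges n = {e. e \<subseteq> {..<n} \<and> card e = 2}"

definition graphs_nm :: "nat \<Rightarrow> nat \<Rightarrow> nat set set set" where
  "graphs_nm n m = {E. E \<subseteq> all_edges n \<and> card E = m}"

definition Gnm :: "nat \<Rightarrow> nat \<Rightarrow> nat set set pmf" where
  "Gnm n m = pmf_of_set (graphs_nm n m)"

definition m_of :: "real \<Rightarrow> nat \<Rightarrow> nat" where
  "m_of p n = nat \<lfloor>p * real (n choose 2)\<rfloor>"

definition kL :: "nat \<Rightarrow> nat \<Rightarrow> nat" where
  "kL n k = n - k * (n div k)"

definition kS :: "nat \<Rightarrow> nat \<Rightarrow> nat" where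
  "kS n k = k - kL n k"

definition equipartitions :: "nat \<Rightarrow> nat \<Rightarrow> (nat \<Rightarrow> nat set) set" where
  "equipartitions n k = {P. P \<in> extensional {..<k}
      \<and> (\<Union>i<k. P i) = {..<n}
      \<and> (\<forall>i<k. \<forall>j<k. i \<noteq> j \<longrightarrow> P i \<inter> P j = {})
      \<and> (\<forall>i<k. card (P i) = (if i < kL n k then nat \<lceil>real n / real k\<rceil> else n div k))}"

definition independent_in :: "nat set set \<Rightarrow> nat set \<Rightarrow> bool" where
  "independent_in E S \<longleftrightarrow> (\<forall>u\<in>S. \<forall>v\<in>S. {u, v} \<notin> E)"

definition X_count :: "nat \<Rightarrow> nat \<Rightarrow> nat set set \<Rightarrow> nat" where
  "X_count n k E = card {P \<in> equipartitions n k. \<forall>i<k. independent_in E (P i)}"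

definition mu :: "real \<Rightarrow> nat \<Rightarrow> nat \<Rightarrow> real" where
  "mu p n k = measure_pmf.expectation (Gnm n (m_of p n)) (\<lambda>E. real (X_count n k E))"

definition mu_bar :: "real \<Rightarrow> nat \<Rightarrow> nat \<Rightarrow> real" where
  "mu_bar p n k = mu p n k / (fact (kL n k) * fact (kS n k))"

end

(*
  An ordered k-equipartition is the same as a list of part labels of the vertices 0, ..., n - 1
  with prescribed label multiplicities s_0, ..., s_(k-1), so there are n! / prod s_i! of them.
  For each of them, the m-edge graphs in which all parts are independent are the m-subsets of the
  N - F pairs not inside a part (N = n choose 2, F = sum (s_i choose 2)).  This gives the exact
  formula  mu_bar = n! C(N - F, m) / (C(N, m) prod s_i! kL! kS!).

  Going from k to k + 1 parts with a = n div k, F drops by at least a choose 2, so the binomial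
  gains a factor of at least (N / (N - m))^(a choose 2), about b^(a^2 / 2), while the factorial
  weight grows by at most (k + 1)^(a + 1) / a^(a - 1), about (n / a)^a.  Since n / k is
  2 log_b n - 2 log_b log_b n + O(1), a c / 2 = ln n - ln log_b n + O(1) with c = ln b, and the
  logarithm of the ratio is a (ln log_b n + O(1)), which is of order log n log log n.
*)

theory Submission
  imports Defs "HOL-Combinatorics.Multiset_Permutations" "HOL-Real_Asymp.Real_Asymp"
begin

lemma mult_Suc_add_diff_mult: "j \<le> k \<Longrightarrow> j * (a + 1) + (k - j) * a = k * a + (j::nat)"
  by (simp add: algebra_simps diff_mult_distrib)

lemma Suc_choose_two: "Suc a choose 2 = (a choose 2) + a"
  by (simp add: numeral_2_eq_2)

lemma two_mult_choose_two_add_self: "2 * (n choose 2) + n = n * n"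
  by (induction n) (simp_all add: Suc_choose_two)

lemma real_choose_two: "real (n choose 2) = real n * (real n - 1) / 2"
  using arg_cong[OF two_mult_choose_two_add_self[of n], of real] by (simp add: algebra_simps)

lemma div_mod_eq_of_eq: "r < d \<Longrightarrow> n = d * q + r \<Longrightarrow> n div d = q \<and> n mod d = (r::nat)"
  by simp

lemma sum_card_filter_swap:
  assumes "finite A" "finite B"
  shows "(\<Sum>a\<in>A. card {b\<in>B. R a b}) = (\<Sum>b\<in>B. card {a\<in>A. R a b})"
proof -
  have "(\<Sum>a\<in>A. card {b\<in>B. R a b}) = (\<Sum>a\<in>A. \<Sum>b\<in>B. if R a b then 1 else 0)"
    using assms(2) by (simp add: sum.If_cases Int_def)
  also have "\<dots> = (\<Sum>b\<in>B. \<Sum>a\<in>A. if R a b then 1 else 0)"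
    by (rule sum.swap)
  also have "\<dots> = (\<Sum>b\<in>B. card {a\<in>A. R a b})"
    using assms(1) by (simp add: sum.If_cases Int_def)
  finally show ?thesis .
qed

lemma fact_add_le_mult_power: "fact (y + d) \<le> (fact y * (y + d) ^ d :: nat)"
proof (induction d)
  case 0 thus ?case by simp
next
  case (Suc d)
  have "fact (y + Suc d) = (y + Suc d) * (fact (y + d) :: nat)"
    by (simp only: add_Suc_right fact_Suc of_nat_id)
  also have "\<dots> \<le> (y + Suc d) * (fact y * (y + d) ^ d)"
    using Suc.IH by (rule mult_le_mono2)
  also have "\<dots> \<le> (y + Suc d) * (fact y * (y + Suc d) ^ d)"
    by (intro mult_le_mono le_refl power_mono) auto
  also have "\<dots> = fact y * (y + Suc d) ^ Suc d"
    by (simp only: power_Suc mult.assoc mult.left_commute)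
  finally show ?case .
qed

lemma fact_le_fact_mult_power:
  assumes "x \<le> y + r" "x \<le> M" "1 \<le> M"
  shows "fact x \<le> fact y * M ^ r"
proof (cases "x \<le> y")
  case True
  have "fact x \<le> (fact y :: nat)" using True by (rule fact_mono_nat)
  also have "\<dots> \<le> fact y * M ^ r" using assms(3) by simp
  finally show ?thesis .
next
  case False
  then obtain d where d: "x = y + d" "d \<le> r"
    using assms(1) by (metis le_add_diff_inverse nat_le_linear add_le_cancel_left)
  have "fact x \<le> fact y * x ^ d" using fact_add_le_mult_power[of y d] d by simp
  also have "\<dots> \<le> fact y * M ^ d" using assms(2) by (simp add: power_mono)
  also have "\<dots> \<le> fact y * M ^ r" using assms(3) d(2) by (simp add: power_increasing)
  finally show ?thesis .
qed

lemma fact_le_power_of_le: "n \<le> a \<Longrightarrow> fact n \<le> (a ^ n :: nat)"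
  using fact_le_power[of n, where 'a=nat] power_mono[of n a n] by simp

lemma fact_mult_fact_le_fact_add: "fact a * fact u \<le> (fact (u + a) :: nat)"
  by (metis add.commute dvd_imp_le fact_fact_dvd_fact fact_gt_zero)

lemma fact_mult_fact_mult_power_le_of_le:
  fixes j s w :: nat
  defines "a \<equiv> j + s + 1" and "K \<equiv> j + s + w + 2"
  assumes square_le: "a * a \<le> K" and le: "s \<le> j"
  shows "fact (j + w + 1) * fact (s + 1) * a ^ (j + s)
      \<le> (a + 1) ^ j * fact (s + 1 + w) * K ^ (a + 1)"
proof -
  have K_pos: "1 \<le> K" unfolding K_def by simp
  have fact_large: "fact (j + w + 1) \<le> fact (s + 1 + w) * K ^ (j - s)"
    by (rule fact_le_fact_mult_power) (use le in \<open>auto simp: K_def\<close>)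
  have fact_small: "fact (s + 1) \<le> a ^ (s + 1)" by (rule fact_le_power_of_le) (simp add: a_def)
  have power_split: "a ^ (j + s) \<le> (a + 1) ^ j * a ^ s"
    by (simp add: power_add power_mono)
  have power_pair: "a ^ (s + 1) * a ^ s \<le> (a * a) ^ (s + 1)"
    by (simp add: power_mult_distrib power_add)
  hence power_pair_le: "a ^ (s + 1) * a ^ s \<le> K ^ (s + 1)"
    using square_le by (meson order.trans power_mono zero_le)
  have "fact (j + w + 1) * fact (s + 1) * a ^ (j + s)
      \<le> (fact (s + 1 + w) * K ^ (j - s)) * a ^ (s + 1) * ((a + 1) ^ j * a ^ s)"
    using fact_large fact_small power_split by (intro mult_le_mono)
  also have "\<dots> = (a + 1) ^ j * fact (s + 1 + w) * K ^ (j - s) * (a ^ (s + 1) * a ^ s)"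
    by (simp add: algebra_simps)
  also have "(a + 1) ^ j * fact (s + 1 + w) * K ^ (j - s) * (a ^ (s + 1) * a ^ s)
      \<le> (a + 1) ^ j * fact (s + 1 + w) * K ^ (j - s) * K ^ (s + 1)"
    using power_pair_le by (rule mult_le_mono2)
  also have "\<dots> = (a + 1) ^ j * fact (s + 1 + w) * K ^ (j + 1)"
    using le by (simp add: power_add[symmetric] mult.assoc)
  also have "\<dots> \<le> (a + 1) ^ j * fact (s + 1 + w) * K ^ (a + 1)"
    using K_pos by (intro mult_le_mono2 power_increasing) (auto simp: a_def)
  finally show ?thesis .
qed

lemma fact_mult_fact_mult_power_le_of_less:
  fixes j s w :: nat
  defines "a \<equiv> j + s + 1" and "K \<equiv> j + s + w + 2"
  assumes square_le: "a * a \<le> K" and less: "j < s"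
  shows "fact (j + w + 1) * fact (s + 1) * a ^ (j + s)
      \<le> (a + 1) ^ j * fact (s + 1 + w) * K ^ (a + 1)"
proof -
  have fact_large: "fact (j + w + 1) \<le> (fact (s + 1 + w) :: nat)"
    by (rule fact_mono_nat) (use less in auto)
  have small_le_square: "fact (s + 1) * a ^ (j + s) \<le> (a * a) ^ a"
  proof -
    have "fact (s + 1) \<le> a ^ (s + 1)" by (rule fact_le_power_of_le) (simp add: a_def)
    also have "\<dots> \<le> a ^ a" by (rule power_increasing) (auto simp: a_def)
    finally have "fact (s + 1) \<le> a ^ a" .
    moreover have "a ^ (j + s) \<le> a ^ a" by (rule power_increasing) (auto simp: a_def)
    ultimately have "fact (s + 1) * a ^ (j + s) \<le> a ^ a * a ^ a" by (rule mult_le_mono)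
    thus ?thesis by (simp add: power_mult_distrib)
  qed
  also have "\<dots> \<le> K ^ a" using square_le by (rule power_mono) simp
  also have "\<dots> \<le> K ^ (a + 1)" by (rule power_increasing) (auto simp: K_def)
  finally have small_le: "fact (s + 1) * a ^ (j + s) \<le> K ^ (a + 1)" .
  have "fact (j + w + 1) * fact (s + 1) * a ^ (j + s)
      = fact (j + w + 1) * (fact (s + 1) * a ^ (j + s))"
    by simp
  also have "\<dots> \<le> fact (s + 1 + w) * K ^ (a + 1)" using fact_large small_le by (rule mult_le_mono)
  also have "\<dots> \<le> (a + 1) ^ j * (fact (s + 1 + w) * K ^ (a + 1))" by simp
  finally show ?thesis by (simp add: mult.assoc)
qed

lemma fact_mult_fact_mult_power_le:
  fixes j s w :: nat
  defines "a \<equiv> j + s + 1" and "K \<equiv> j + s + w + 2"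
  assumes square_le: "a * a \<le> K"
  shows "fact (j + w + 1) * fact (s + 1) * a ^ (j + s)
      \<le> (a + 1) ^ j * fact (s + 1 + w) * K ^ (a + 1)"
  using fact_mult_fact_mult_power_le_of_le[of j s w] fact_mult_fact_mult_power_le_of_less[of j s w]
    square_le unfolding a_def K_def by (cases "s \<le> j") simp_all

lemma binomial_Suc_ge_mult:
  fixes x m N :: nat
  assumes "m \<le> x" "Suc x \<le> N"
  shows "real (x choose m) * (real N / real (N - m)) \<le> real (Suc x choose m)"
proof -
  have pos: "real (Suc x - m) > 0" "real (N - m) > 0" using assms by simp_all
  have "real (Suc x) * real m \<le> real N * real m" using assms(2) by (intro mult_right_mono) auto
  hence "real N * real (Suc x - m) \<le> real (Suc x) * real (N - m)"
    using assms by (simp add: of_nat_diff algebra_simps)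
  hence "real N / real (N - m) \<le> real (Suc x) / real (Suc x - m)"
    using pos by (simp add: field_simps)
  hence "real (x choose m) * (real N / real (N - m))
      \<le> real (x choose m) * (real (Suc x) / real (Suc x - m))"
    by (rule mult_left_mono) simp
  also have "\<dots> = real (Suc x choose m)"
    using arg_cong[OF binomial_absorb_comp[of "Suc x" m], of real] pos by (simp add: field_simps)
  finally show ?thesis .
qed

lemma binomial_add_ge_power:
  fixes A d m N :: nat
  assumes "m \<le> A" "A + d \<le> N"
  shows "real (A choose m) * (real N / real (N - m)) ^ d \<le> real ((A + d) choose m)"
  using assms(2)
proof (induction d)
  case (Suc d)
  have "real (A choose m) * (real N / real (N - m)) ^ Suc d
          = real (A choose m) * (real N / real (N - m)) ^ d * (real N / real (N - m))" by simp
  also have "\<dots> \<le> real ((A + d) choose m) * (real N / real (N - m))"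
    using Suc by (intro mult_right_mono) simp_all
  also have "\<dots> \<le> real ((A + Suc d) choose m)"
    using binomial_Suc_ge_mult[of m "A + d" N] assms(1) Suc.prems by simp
  finally show ?case .
qed simp

lemma ln_div_diff_ge:
  fixes p N m :: real
  assumes p: "0 < p" "p < 1" and N: "N > 0" and m: "p * N - 1 < m" "m < N"
  shows "ln (1 / (1 - p)) - 1 / ((1 - p) * N) \<le> ln (N / (N - m))"
proof -
  define q where "q = (1 - p) * N"
  have q: "q > 0" unfolding q_def using p N by simp
  have "N - m \<le> q * (1 + 1 / q)"
    using m q p N by (simp add: q_def algebra_simps)
  hence "ln (N - m) \<le> ln (q * (1 + 1 / q))"
    using m q by (subst ln_le_cancel_iff) auto
  also have "\<dots> = ln q + ln (1 + 1 / q)"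
    using q by (intro ln_mult_pos) (simp_all add: add_pos_pos)
  also have "ln (1 + 1 / q) \<le> 1 / q"
    using q by (intro ln_add_one_self_le_self) simp
  finally have "ln (N - m) \<le> ln (1 - p) + ln N + 1 / q"
    unfolding q_def using p N by (simp add: ln_mult)
  moreover have "ln (N / (N - m)) = ln N - ln (N - m)" and "ln (1 / (1 - p)) = - ln (1 - p)"
    using p N m by (simp_all add: ln_div)
  ultimately show ?thesis unfolding q_def by linarith
qed

definition part_size :: "nat \<Rightarrow> nat \<Rightarrow> nat \<Rightarrow> nat" where
  "part_size n k i = (if i < kL n k then nat \<lceil>real n / real k\<rceil> else n div k)"

lemma kL_eq_mod: "kL n k = n mod k"
  by (simp add: kL_def minus_mult_div_eq_mod)

lemma nat_ceiling_divide_eq_Suc_div: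
  assumes k: "k > 0" and "n mod k > 0"
  shows "nat \<lceil>real n / real k\<rceil> = n div k + 1"
proof -
  have "real n = real k * real (n div k) + real (n mod k)"
    by (metis div_mult_mod_eq mult.commute of_nat_add of_nat_mult)
  hence "real n / real k = real (n div k) + real (n mod k) / real k"
    using k by (simp add: field_simps)
  moreover have "0 < real (n mod k) / real k" and "real (n mod k) / real k < 1"
    using assms by simp_all
  ultimately have "\<lceil>real n / real k\<rceil> = int (n div k) + 1"
    by (intro ceiling_unique) simp_all
  thus ?thesis by simp
qed

lemma part_size_less_mod: "k > 0 \<Longrightarrow> i < n mod k \<Longrightarrow> part_size n k i = n div k + 1"
  by (simp add: part_size_def kL_eq_mod nat_ceiling_divide_eq_Suc_div)

lemma part_size_ge_mod: "n mod k \<le> i \<Longrightarrow> part_size n k i = n div k"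
  by (simp add: part_size_def kL_eq_mod)

lemma sum_part_size_fun:
  fixes g :: "nat \<Rightarrow> 'a::comm_semiring_1"
  assumes "k > 0"
  shows "(\<Sum>i<k. g (part_size n k i))
           = of_nat (n mod k) * g (n div k + 1) + of_nat (k - n mod k) * g (n div k)"
proof -
  have "(\<Sum>i<k. g (part_size n k i))
          = (\<Sum>i<n mod k. g (part_size n k i)) + (\<Sum>i\<in>{n mod k..<k}. g (part_size n k i))"
    using sum.atLeastLessThan_concat[of 0 "n mod k" k "\<lambda>i. g (part_size n k i)"] assms
    by (simp add: atLeast0LessThan)
  also have "(\<Sum>i<n mod k. g (part_size n k i)) = (\<Sum>i<n mod k. g (n div k + 1))"
    by (rule sum.cong) (auto simp: part_size_less_mod assms)
  also have "(\<Sum>i\<in>{n mod k..<k}. g (part_size n k i)) = (\<Sum>i\<in>{n mod k..<k}. g (n div k))"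
    by (rule sum.cong) (auto simp: part_size_ge_mod)
  finally show ?thesis by (simp add: mult_of_nat_commute)
qed

lemma prod_part_size_fun:
  fixes g :: "nat \<Rightarrow> 'a::comm_monoid_mult"
  assumes "k > 0"
  shows "(\<Prod>i<k. g (part_size n k i)) = g (n div k + 1) ^ (n mod k) * g (n div k) ^ (k - n mod k)"
proof -
  have "(\<Prod>i<k. g (part_size n k i))
          = (\<Prod>i<n mod k. g (part_size n k i)) * (\<Prod>i\<in>{n mod k..<k}. g (part_size n k i))"
    using prod.atLeastLessThan_concat[of 0 "n mod k" k "\<lambda>i. g (part_size n k i)"] assms
    by (simp add: atLeast0LessThan)
  also have "(\<Prod>i<n mod k. g (part_size n k i)) = (\<Prod>i<n mod k. g (n div k + 1))"
    by (rule prod.cong) (auto simp: part_size_less_mod assms)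
  also have "(\<Prod>i\<in>{n mod k..<k}. g (part_size n k i)) = (\<Prod>i\<in>{n mod k..<k}. g (n div k))"
    by (rule prod.cong) (auto simp: part_size_ge_mod)
  finally show ?thesis by simp
qed

lemma sum_part_size: "k > 0 \<Longrightarrow> (\<Sum>i<k. part_size n k i) = n"
  using sum_part_size_fun[of k "\<lambda>x. x" n] mult_Suc_add_diff_mult[of "n mod k" k "n div k"]
  by (simp add: less_imp_le)

definition label_mset :: "nat \<Rightarrow> nat \<Rightarrow> nat multiset" where
  "label_mset n k = (\<Sum>i<k. replicate_mset (part_size n k i) i)"

lemma count_label_mset: "count (label_mset n k) i = (if i < k then part_size n k i else 0)"
  unfolding label_mset_def count_sum by auto

lemma mem_label_mset: "x \<in># label_mset n k \<Longrightarrow> x < k"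
  by (metis count_eq_zero_iff count_label_mset)

lemma size_label_mset: "k > 0 \<Longrightarrow> size (label_mset n k) = n"
  unfolding label_mset_def by (simp add: sum_part_size)

definition parts_of_labels :: "nat \<Rightarrow> nat list \<Rightarrow> nat \<Rightarrow> nat set" where
  "parts_of_labels k xs = (\<lambda>i\<in>{..<k}. {j. j < length xs \<and> xs ! j = i})"

lemma count_mset_eq_card_positions: "count (mset xs) i = card {j. j < length xs \<and> xs ! j = i}"
  by (simp add: count_mset count_list_eq_length_filter length_filter_conv_card eq_commute)

lemma length_labels:
  "k > 0 \<Longrightarrow> xs \<in> permutations_of_multiset (label_mset n k) \<Longrightarrow> length xs = n"
  by (metis permutations_of_multisetD size_label_mset size_mset)

lemma labels_less:
  assumes "xs \<in> permutations_of_multiset (label_mset n k)" and "j < length xs"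
  shows "xs ! j < k"
proof -
  have "xs ! j \<in># label_mset n k"
    using assms by (metis nth_mem permutations_of_multisetD set_mset_mset)
  thus ?thesis by (rule mem_label_mset)
qed

lemma card_parts_of_labels:
  assumes "xs \<in> permutations_of_multiset (label_mset n k)" and "i < k"
  shows "card (parts_of_labels k xs i) = part_size n k i"
  using assms count_mset_eq_card_positions[of xs i]
  by (simp add: parts_of_labels_def permutations_of_multisetD count_label_mset)

lemma parts_of_labels_in_equipartitions:
  assumes k: "k > 0" and xs: "xs \<in> permutations_of_multiset (label_mset n k)"
  shows "parts_of_labels k xs \<in> equipartitions n k"
  unfolding equipartitions_def
proof (intro CollectI conjI allI impI)
  show "(\<Union>i<k. parts_of_labels k xs i) = {..<n}"
    using labels_less[OF xs] length_labels[OF k xs] by (auto simp: parts_of_labels_def)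
  fix i assume "i < k"
  thus "card (parts_of_labels k xs i) = (if i < kL n k then nat \<lceil>real n / real k\<rceil> else n div k)"
    using card_parts_of_labels[OF xs] by (simp add: part_size_def)
qed (auto simp: parts_of_labels_def)

lemma inj_on_parts_of_labels:
  assumes k: "k > 0"
  shows "inj_on (parts_of_labels k) (permutations_of_multiset (label_mset n k))"
proof (rule inj_onI)
  fix xs ys
  assume xs: "xs \<in> permutations_of_multiset (label_mset n k)"
    and ys: "ys \<in> permutations_of_multiset (label_mset n k)"
    and eq: "parts_of_labels k xs = parts_of_labels k ys"
  show "xs = ys"
  proof (rule nth_equalityI)
    show len: "length xs = length ys" using length_labels[OF k] xs ys by simp
    fix j assume j: "j < length xs"
    have "j \<in> parts_of_labels k xs (xs ! j)"
      using labels_less[OF xs j] j by (simp add: parts_of_labels_def)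
    hence "j \<in> parts_of_labels k ys (xs ! j)" using eq by simp
    thus "xs ! j = ys ! j" using labels_less[OF xs j] by (simp add: parts_of_labels_def)
  qed
qed

lemma equipartition_in_image_parts_of_labels:
  assumes P: "P \<in> equipartitions n k"
  shows "P \<in> parts_of_labels k ` permutations_of_multiset (label_mset n k)"
proof -
  have ext: "P \<in> extensional {..<k}" and cover: "(\<Union>i<k. P i) = {..<n}"
    and disj: "\<And>i j. i < k \<Longrightarrow> j < k \<Longrightarrow> i \<noteq> j \<Longrightarrow> P i \<inter> P j = {}"
    and card: "\<And>i. i < k \<Longrightarrow> card (P i) = part_size n k i"
    using P unfolding equipartitions_def part_size_def by auto
  define label where "label j = (THE i. i < k \<and> j \<in> P i)" for j
  have label: "label j < k \<and> j \<in> P (label j)" if "j < n" for j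
  proof -
    obtain i where i: "i < k" "j \<in> P i" using cover \<open>j < n\<close> by auto
    have "label j = i" unfolding label_def using i disj by (intro the_equality) blast+
    thus ?thesis using i by simp
  qed
  have in_range: "j < n" if "j \<in> P i" "i < k" for i j
    using cover that by blast
  have label_eq: "label j = i" if "j \<in> P i" "i < k" for i j
    using label[OF in_range[OF that]] disj[of i "label j"] that by blast
  define xs where "xs = map label [0..<n]"
  have parts: "P i = {j. j < length xs \<and> xs ! j = i}" if "i < k" for i
  proof -
    have "P i = {j. j < n \<and> label j = i}"
      using label label_eq[OF _ that] in_range[OF _ that] by blast
    also have "\<dots> = {j. j < length xs \<and> xs ! j = i}" by (auto simp: xs_def)
    finally show ?thesis .
  qed
  have "parts_of_labels k xs = P"
  proof (rule extensionalityI[OF _ ext])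
    show "parts_of_labels k xs \<in> extensional {..<k}" by (simp add: parts_of_labels_def)
    show "parts_of_labels k xs i = P i" if "i \<in> {..<k}" for i
      using parts that by (simp add: parts_of_labels_def)
  qed
  moreover have "mset xs = label_mset n k"
  proof (rule multiset_eqI)
    fix i
    have "{j. j < length xs \<and> xs ! j = i} = {}" if "\<not> i < k"
      using that label by (auto simp: xs_def)
    thus "count (mset xs) i = count (label_mset n k) i"
      using parts card by (auto simp: count_mset_eq_card_positions count_label_mset)
  qed
  ultimately show ?thesis by (auto simp: permutations_of_multiset_def)
qed

lemma bij_betw_parts_of_labels:
  "k > 0 \<Longrightarrow> bij_betw (parts_of_labels k) (permutations_of_multiset (label_mset n k)) (equipartitions n k)"
  unfolding bij_betw_def
  using inj_on_parts_of_labels parts_of_labels_in_equipartitions equipartition_in_image_parts_of_labels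
  by blast

lemma card_equipartitions:
  assumes k: "k > 0"
  shows "card (equipartitions n k) * (\<Prod>i<k. fact (part_size n k i)) = (fact n :: nat)"
proof -
  have "(\<Prod>x\<in>set_mset (label_mset n k). fact (count (label_mset n k) x))
          = (\<Prod>i<k. fact (part_size n k i) :: nat)"
    by (rule prod.mono_neutral_cong_left)
      (auto simp: count_label_mset not_in_iff dest: mem_label_mset)
  thus ?thesis
    using card_permutations_of_multiset_aux[of "label_mset n k"] size_label_mset[OF k]
      bij_betw_same_card[OF bij_betw_parts_of_labels[OF k]]
    by simp
qed

lemma finite_all_edges: "finite (all_edges n)"
  unfolding all_edges_def by (rule finite_subset[of _ "Pow {..<n}"]) auto

lemma card_all_edges: "card (all_edges n) = n choose 2"
  unfolding all_edges_def using n_subsets[of "{..<n}" 2] by simp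

lemma finite_graphs_nm: "finite (graphs_nm n m)"
  unfolding graphs_nm_def
  by (rule finite_subset[of _ "Pow (all_edges n)"]) (auto simp: finite_all_edges)

lemma card_graphs_nm: "card (graphs_nm n m) = (n choose 2) choose m"
  unfolding graphs_nm_def using n_subsets[OF finite_all_edges, of n m] card_all_edges by simp

lemma graphs_nm_nonempty: "m \<le> n choose 2 \<Longrightarrow> graphs_nm n m \<noteq> {}"
  using card_graphs_nm[of n m] by (metis card.empty zero_less_binomial not_gr0)

definition inner_edges :: "nat \<Rightarrow> nat \<Rightarrow> (nat \<Rightarrow> nat set) \<Rightarrow> nat set set" where
  "inner_edges n k P = {e \<in> all_edges n. \<exists>i<k. e \<subseteq> P i}"

definition inner_pairs :: "nat \<Rightarrow> nat \<Rightarrow> nat \<Rightarrow> nat" where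
  "inner_pairs k a j = j * ((a + 1) choose 2) + (k - j) * (a choose 2)"

lemma inner_pairs_eq: "j \<le> k \<Longrightarrow> inner_pairs k a j = k * (a choose 2) + j * a"
  by (simp add: inner_pairs_def Suc_choose_two algebra_simps diff_mult_distrib)

lemma card_inner_edges:
  assumes k: "k > 0" and P: "P \<in> equipartitions n k"
  shows "card (inner_edges n k P) = inner_pairs k (n div k) (n mod k)"
proof -
  have sub: "P i \<subseteq> {..<n}" and size: "card (P i) = part_size n k i" if "i < k" for i
    using P that unfolding equipartitions_def part_size_def by auto
  have disj: "P i \<inter> P j = {}" if "i < k" "j < k" "i \<noteq> j" for i j
    using P that unfolding equipartitions_def by auto
  have fin: "finite (P i)" if "i < k" for i
    using sub[OF that] finite_subset by blast
  have "inner_edges n k P = (\<Union>i<k. {e. e \<subseteq> P i \<and> card e = 2})"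
    using sub unfolding inner_edges_def all_edges_def by blast
  also have "card \<dots> = (\<Sum>i<k. card {e. e \<subseteq> P i \<and> card e = 2})"
  proof (rule card_UN_disjoint)
    show "\<forall>i\<in>{..<k}. finite {e. e \<subseteq> P i \<and> card e = 2}"
      using fin by simp
    show "\<forall>i\<in>{..<k}. \<forall>j\<in>{..<k}. i \<noteq> j \<longrightarrow>
        {e. e \<subseteq> P i \<and> card e = 2} \<inter> {e. e \<subseteq> P j \<and> card e = 2} = {}"
      using disj by (auto dest!: card_2_iff[THEN iffD1]) blast
  qed simp
  also have "\<dots> = (\<Sum>i<k. part_size n k i choose 2)"
    by (rule sum.cong) (auto simp: n_subsets fin size)
  also have "\<dots> = inner_pairs k (n div k) (n mod k)"
    using sum_part_size_fun[OF k, of "\<lambda>s. s choose 2" n] by (simp add: inner_pairs_def)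
  finally show ?thesis .
qed

lemma independent_parts_iff_disjoint_inner_edges:
  assumes E: "E \<subseteq> all_edges n"
  shows "(\<forall>i<k. independent_in E (P i)) \<longleftrightarrow> E \<inter> inner_edges n k P = {}"
proof
  assume indep: "\<forall>i<k. independent_in E (P i)"
  show "E \<inter> inner_edges n k P = {}"
  proof (rule ccontr)
    assume "E \<inter> inner_edges n k P \<noteq> {}"
    then obtain e i where e: "e \<in> E" "e \<subseteq> P i" "i < k" "card e = 2"
      unfolding inner_edges_def all_edges_def by blast
    then obtain u v where "e = {u, v}" by (meson card_2_iff)
    thus False using indep e unfolding independent_in_def by blast
  qed
next
  assume "E \<inter> inner_edges n k P = {}"
  thus "\<forall>i<k. independent_in E (P i)"
    using E unfolding independent_in_def inner_edges_def by blast
qed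

lemma card_graphs_with_independent_parts:
  assumes "k > 0" and P: "P \<in> equipartitions n k"
  shows "card {E \<in> graphs_nm n m. \<forall>i<k. independent_in E (P i)}
           = ((n choose 2) - inner_pairs k (n div k) (n mod k)) choose m"
proof -
  have sub: "inner_edges n k P \<subseteq> all_edges n" unfolding inner_edges_def by blast
  have "{E \<in> graphs_nm n m. \<forall>i<k. independent_in E (P i)}
          = {E. E \<subseteq> all_edges n - inner_edges n k P \<and> card E = m}"
    using independent_parts_iff_disjoint_inner_edges unfolding graphs_nm_def by blast
  moreover have "card (all_edges n - inner_edges n k P)
      = (n choose 2) - inner_pairs k (n div k) (n mod k)"
    using card_Diff_subset[OF finite_subset[OF sub finite_all_edges] sub]
      card_inner_edges[OF assms] card_all_edges by simp
  ultimately show ?thesis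
    using n_subsets[of "all_edges n - inner_edges n k P" m] finite_all_edges by simp
qed

lemma finite_equipartitions: "finite (equipartitions n k)"
proof (rule finite_subset)
  show "equipartitions n k \<subseteq> PiE {..<k} (\<lambda>_. Pow {..<n})"
    unfolding equipartitions_def PiE_def Pi_def by auto
qed (simp add: finite_PiE)

lemma mu_eq:
  assumes "k > 0" and m: "m_of p n \<le> n choose 2"
  shows "mu p n k = real (card (equipartitions n k))
           * real (((n choose 2) - inner_pairs k (n div k) (n mod k)) choose m_of p n)
           / real ((n choose 2) choose m_of p n)"
proof -
  let ?G = "graphs_nm n (m_of p n)" and ?EQ = "equipartitions n k"
  have "mu p n k = (\<Sum>E\<in>?G. real (X_count n k E)) / real (card ?G)"
    unfolding mu_def Gnm_def
    by (rule integral_pmf_of_set[OF graphs_nm_nonempty[OF m] finite_graphs_nm])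
  also have "(\<Sum>E\<in>?G. real (X_count n k E)) = real (\<Sum>E\<in>?G. X_count n k E)" by simp
  also have "(\<Sum>E\<in>?G. X_count n k E) = (\<Sum>P\<in>?EQ. card {E\<in>?G. \<forall>i<k. independent_in E (P i)})"
    unfolding X_count_def by (rule sum_card_filter_swap[OF finite_graphs_nm finite_equipartitions])
  also have "\<dots> = card ?EQ * (((n choose 2) - inner_pairs k (n div k) (n mod k)) choose m_of p n)"
    using card_graphs_with_independent_parts[OF assms(1)] by simp
  finally show ?thesis by (simp add: card_graphs_nm)
qed

definition equipartition_weight :: "nat \<Rightarrow> nat \<Rightarrow> nat \<Rightarrow> nat" where
  "equipartition_weight k a j = fact (a + 1) ^ j * fact a ^ (k - j) * fact j * fact (k - j)"

lemma prod_fact_part_size_mult_fact: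
  assumes "k > 0"
  shows "(\<Prod>i<k. fact (part_size n k i)) * fact (kL n k) * fact (kS n k)
           = equipartition_weight k (n div k) (n mod k)"
  using prod_part_size_fun[OF assms, of "fact :: nat \<Rightarrow> nat" n]
  unfolding equipartition_weight_def kS_def kL_eq_mod by (simp add: mult.assoc)

lemma mu_bar_eq:
  assumes k: "k > 0" and m: "m_of p n \<le> n choose 2"
  shows "mu_bar p n k
           = fact n * real (((n choose 2) - inner_pairs k (n div k) (n mod k)) choose m_of p n)
             / (real ((n choose 2) choose m_of p n) * real (equipartition_weight k (n div k) (n mod k)))"
proof -
  let ?Pr = "(\<Prod>i<k. fact (part_size n k i)) :: nat"
  have "?Pr > 0" by (simp add: prod_pos)
  hence card_eq: "real (card (equipartitions n k)) = fact n / real ?Pr"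
    using arg_cong[OF card_equipartitions[OF k, of n], of real] by (simp add: field_simps)
  have weight_eq: "real (equipartition_weight k (n div k) (n mod k))
      = real ?Pr * fact (kL n k) * fact (kS n k)"
    using arg_cong[OF prod_fact_part_size_mult_fact[OF k, of n], of real] by simp
  show ?thesis
    unfolding mu_bar_def mu_eq[OF k m] card_eq weight_eq by (simp add: field_simps)
qed

lemma equipartition_weight_eq:
  assumes "j \<le> k"
  shows "equipartition_weight k a j = fact a ^ k * (a + 1) ^ j * fact j * fact (k - j)"
proof -
  have "fact (a + 1) ^ j = (a + 1) ^ j * (fact a :: nat) ^ j"
    by (metis Suc_eq_plus1 fact_Suc of_nat_id power_mult_distrib)
  also have "\<dots> * fact a ^ (k - j) = fact a ^ k * (a + 1) ^ j"
    using assms by (simp flip: power_add)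
  finally show ?thesis unfolding equipartition_weight_def by (simp only: mult.assoc)
qed

lemma equipartition_weight_succ_same_div:
  fixes u a v :: nat
  shows "equipartition_weight (u + a + v + 1) a u * a ^ (a - 1)
      \<le> equipartition_weight (u + a + v) a (u + a) * (u + a + v + 1) ^ (a + 1)"
proof -
  define K where "K = u + a + v + 1"
  define P where "P = fact a ^ (u + a + v) * (a + 1) ^ u"
  have weights: "equipartition_weight K a u * a ^ (a - 1)
        = P * ((fact a * fact u) * fact (a + v + 1) * a ^ (a - 1))"
      "equipartition_weight (u + a + v) a (u + a) * K ^ (a + 1)
        = P * (fact (u + a) * (fact v * K ^ (a + 1)) * (a + 1) ^ a)"
    unfolding P_def K_def by (simp_all add: equipartition_weight_eq power_add ac_simps)
  have "fact (a + v + 1) \<le> fact v * K ^ (a + 1)"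
    by (rule fact_le_fact_mult_power) (auto simp: K_def)
  moreover have "a ^ (a - 1) \<le> (a + 1) ^ (a - 1)" by (simp add: power_mono)
  hence "a ^ (a - 1) \<le> (a + 1) ^ a" using power_increasing[of "a - 1" a "a + 1"] by simp
  ultimately have "equipartition_weight K a u * a ^ (a - 1)
      \<le> equipartition_weight (u + a + v) a (u + a) * K ^ (a + 1)"
    unfolding weights using fact_mult_fact_le_fact_add[of a u] by (intro mult_le_mono2 mult_le_mono)
  thus ?thesis unfolding K_def .
qed

lemma equipartition_weight_succ_smaller_div:
  fixes j s w :: nat
  assumes "(j + s + 1) * (j + s + 1) \<le> j + s + w + 2"
  shows "equipartition_weight (j + s + w + 2) (j + s) (j + w + 1) * (j + s + 1) ^ (j + s)
      \<le> equipartition_weight (j + s + w + 1) (j + s + 1) j * (j + s + w + 2) ^ (j + s + 2)"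
proof -
  define a K B where "a = j + s + 1" and "K = j + s + w + 2" and "B = (fact (j + s) :: nat)"
  define P where "P = B ^ (j + s + w + 1) * a ^ (j + w + 1)"
  have "fact a = a * B" unfolding a_def B_def by simp
  hence "equipartition_weight (j + s + w + 1) a j
      = (a * B) ^ (j + s + w + 1) * (a + 1) ^ j * fact j * fact (s + 1 + w)"
    using equipartition_weight_eq[of j "j + s + w + 1" a] by (simp add: ac_simps)
  moreover have "equipartition_weight K (j + s) (j + w + 1)
      = B ^ K * a ^ (j + w + 1) * fact (j + w + 1) * fact (s + 1)"
    using equipartition_weight_eq[of "j + w + 1" K "j + s"] unfolding K_def a_def B_def by simp
  ultimately have weights: "equipartition_weight K (j + s) (j + w + 1) * a ^ (j + s)
        = P * (B * (fact (j + w + 1) * fact (s + 1) * a ^ (j + s)))"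
      "equipartition_weight (j + s + w + 1) a j * K ^ (a + 1)
        = P * ((a ^ s * fact j) * ((a + 1) ^ j * fact (s + 1 + w) * K ^ (a + 1)))"
    unfolding P_def K_def by (simp_all add: power_add power_mult_distrib ac_simps)
  have "B \<le> fact j * a ^ s"
    unfolding B_def by (rule fact_le_fact_mult_power) (auto simp: a_def)
  hence B_le: "B \<le> a ^ s * fact j" by (simp only: mult.commute)
  have fact_bound: "fact (j + w + 1) * fact (s + 1) * a ^ (j + s)
      \<le> (a + 1) ^ j * fact (s + 1 + w) * K ^ (a + 1)"
    using fact_mult_fact_mult_power_le[of j s w] assms unfolding a_def K_def by simp
  have "P * (B * (fact (j + w + 1) * fact (s + 1) * a ^ (j + s)))
      \<le> P * ((a ^ s * fact j) * ((a + 1) ^ j * fact (s + 1 + w) * K ^ (a + 1)))"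
    using mult_le_mono[OF B_le fact_bound] by (rule mult_le_mono2)
  hence "equipartition_weight K (j + s) (j + w + 1) * a ^ (j + s)
      \<le> equipartition_weight (j + s + w + 1) a j * K ^ (a + 1)"
    unfolding weights .
  thus ?thesis unfolding a_def K_def by (simp add: add.assoc)
qed

lemma inner_pairs_succ_same_div:
  "inner_pairs (u + a + v + 1) a u + (a choose 2) \<le> inner_pairs (u + a + v) a (u + a)"
  using two_mult_choose_two_add_self[of a] by (simp add: inner_pairs_eq algebra_simps)

lemma inner_pairs_succ_smaller_div:
  "inner_pairs (j + s + w + 2) (j + s) (j + w + 1) + ((j + s + 1) choose 2)
     \<le> inner_pairs (j + s + w + 1) (j + s + 1) j"
  using two_mult_choose_two_add_self[of "j + s"]
    by (simp add: inner_pairs_eq Suc_choose_two algebra_simps)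

lemma div_mod_Suc_divisor_cases:
  fixes n k :: nat
  defines "a \<equiv> n div k" and "j \<equiv> n mod k"
  assumes k: "k > 0" and a: "a \<le> k"
  obtains (same_div) u v where "j = u + a" "k = u + a + v" "n div (k + 1) = a" "n mod (k + 1) = u"
    | (smaller_div) s w where "a = j + s + 1" "k = j + s + w + 1"
        "n div (k + 1) = j + s" "n mod (k + 1) = j + w + 1"
proof -
  have n: "n = k * a + j" and "j < k" unfolding a_def j_def using k by simp_all
  show ?thesis
  proof (cases "a \<le> j")
    case True
    define u v where "u = j - a" and "v = k - j"
    have uv: "j = u + a" "k = u + a + v"
      using True \<open>j < k\<close> unfolding u_def v_def by simp_all
    hence "n div (k + 1) = a \<and> n mod (k + 1) = u"
      using n by (intro div_mod_eq_of_eq) (simp_all add: algebra_simps)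
    thus ?thesis using uv by (intro same_div) simp_all
  next
    case False
    define s w where "s = a - j - 1" and "w = k - a"
    have sw: "a = j + s + 1" "k = j + s + w + 1" using False a unfolding s_def w_def by simp_all
    hence "n div (k + 1) = j + s \<and> n mod (k + 1) = j + w + 1"
      using n by (intro div_mod_eq_of_eq) (simp_all add: algebra_simps)
    thus ?thesis using sw by (intro smaller_div) simp_all
  qed
qed

lemma equipartition_succ_bounds:
  fixes n k :: nat
  defines "a \<equiv> n div k" and "j \<equiv> n mod k"
  assumes k: "k > 0" and a: "a \<ge> 1" "a * a \<le> k + 1"
  shows "equipartition_weight (k + 1) (n div (k + 1)) (n mod (k + 1)) * a ^ (a - 1)
           \<le> equipartition_weight k a j * (k + 1) ^ (a + 1)" (is ?weight)
    and "inner_pairs (k + 1) (n div (k + 1)) (n mod (k + 1)) + (a choose 2) \<le> inner_pairs k a j"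
      (is ?pairs)
proof -
  have "a \<le> k"
  proof (cases "a \<ge> 2")
    case True
    hence "2 * a \<le> a * a" by simp
    thus ?thesis using a by linarith
  qed (use a k in simp)
  have "?weight \<and> ?pairs"
    using k \<open>a \<le> k\<close>[unfolded a_def]
  proof (cases rule: div_mod_Suc_divisor_cases)
    case (same_div u v)
    thus ?thesis
      using equipartition_weight_succ_same_div[of u a v] inner_pairs_succ_same_div[of u a v]
      unfolding a_def j_def by simp
  next
    case (smaller_div s w)
    hence "(j + s + 1) * (j + s + 1) \<le> j + s + w + 2" using a(2) unfolding a_def j_def by simp
    thus ?thesis
      using smaller_div equipartition_weight_succ_smaller_div[of j s w] inner_pairs_succ_smaller_div[of j s w]
      unfolding a_def j_def by (simp add: add.assoc)
  qed
  thus ?weight ?pairs by simp_all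
qed

lemma two_inner_pairs_le: "j \<le> k \<Longrightarrow> 2 * inner_pairs k a j \<le> a * (k * a + j)"
proof -
  assume "j \<le> k"
  moreover have "k * (2 * (a choose 2) + a) = k * (a * a)"
    by (simp only: two_mult_choose_two_add_self)
  ultimately show ?thesis
    by (simp add: inner_pairs_eq algebra_simps) (use mult_le_mono2[of j k a] in linarith)
qed

lemma mu_bar_succ_ratio_ge:
  fixes p :: real and n k :: nat
  defines "a \<equiv> n div k" and "N \<equiv> n choose 2" and "m \<equiv> m_of p n"
  assumes k: "k > 0" and a: "a \<ge> 1" "a * a \<le> k + 1"
    and mN: "m < N" and FN: "inner_pairs k a (n mod k) + m \<le> N"
  shows "(real N / real (N - m)) ^ (a choose 2) * real a ^ (a - 1) / real (k + 1) ^ (a + 1)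
           \<le> mu_bar p n (k + 1) / mu_bar p n k"
proof -
  define F where "F = inner_pairs k a (n mod k)"
  define F' where "F' = inner_pairs (k + 1) (n div (k + 1)) (n mod (k + 1))"
  define W where "W = equipartition_weight k a (n mod k)"
  define W' where "W' = equipartition_weight (k + 1) (n div (k + 1)) (n mod (k + 1))"
  define \<beta> where "\<beta> = real N / real (N - m)"
  have W'W: "W' * a ^ (a - 1) \<le> W * (k + 1) ^ (a + 1)" and F'F: "F' + (a choose 2) \<le> F"
    using equipartition_succ_bounds[OF k a[unfolded a_def]]
    unfolding W_def W'_def F_def F'_def a_def by simp_all
  have Wpos: "W > 0" "W' > 0" unfolding W_def W'_def equipartition_weight_def by simp_all
  have CF: "real ((N - F) choose m) > 0" using FN unfolding F_def by simp
  have eq_k: "mu_bar p n k = fact n * real ((N - F) choose m) / (real (N choose m) * real W)"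
    using mu_bar_eq[OF k, of p n] mN unfolding F_def W_def N_def m_def a_def by simp
  have eq_K: "mu_bar p n (k + 1)
      = fact n * real ((N - F') choose m) / (real (N choose m) * real W')"
    using mu_bar_eq[of "k + 1" p n] mN unfolding F'_def W'_def N_def m_def by simp
  have "real (N choose m) > 0" using mN by simp
  hence ratio: "mu_bar p n (k + 1) / mu_bar p n k
      = real ((N - F') choose m) / real ((N - F) choose m) * (real W / real W')"
    unfolding eq_k eq_K using CF Wpos by (simp add: field_simps)
  have "\<beta> ^ (a choose 2) \<le> \<beta> ^ (F - F')"
    using F'F mN unfolding \<beta>_def by (intro power_increasing) (auto simp: of_nat_diff)
  also have "\<dots> \<le> real ((N - F') choose m) / real ((N - F) choose m)"
    using binomial_add_ge_power[of m "N - F" "F - F'" N] FN F'F CF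
    unfolding \<beta>_def F_def by (simp add: pos_le_divide_eq mult.commute)
  finally have binomial: "\<beta> ^ (a choose 2) \<le> real ((N - F') choose m) / real ((N - F) choose m)" .
  have "real W' * real a ^ (a - 1) \<le> real W * real (k + 1) ^ (a + 1)"
    using W'W by (metis of_nat_le_iff of_nat_mult of_nat_power)
  hence weight: "real a ^ (a - 1) / real (k + 1) ^ (a + 1) \<le> real W / real W'"
    using Wpos by (simp add: divide_le_eq le_divide_eq mult.commute)
  show ?thesis
    unfolding ratio \<beta>_def[symmetric] using mult_mono[OF binomial weight] by simp
qed

lemma m_of_bounds:
  assumes "0 \<le> p"
  shows "real (m_of p n) \<le> p * real (n choose 2)" and "p * real (n choose 2) - 1 < real (m_of p n)"
  using assms by (simp_all add: m_of_def of_nat_nat)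

lemma ln_ratio_term_ge:
  fixes \<beta> c \<delta> x K :: real and a :: nat
  assumes a: "a \<ge> 1" and \<beta>: "\<beta> > 0" "c - \<delta> \<le> ln \<beta>" and \<delta>: "real a * (real a - 1) * \<delta> \<le> 1"
    and K: "K > 0" "real a * K \<le> x" and x: "real a \<le> x"
  shows "real a * ((real a - 1) * c / 2 + 2 * ln (real a) - ln x - ln 2) - ln x - ln 2 - 1 / 2
           \<le> ln (\<beta> ^ (a choose 2) * real a ^ (a - 1) / (K + 1) ^ (a + 1))"
proof -
  define A where "A = real a"
  have A: "A \<ge> 1" unfolding A_def using a by simp
  have x0: "x > 0" using A x unfolding A_def by simp
  have half: "real (a choose 2) = A * (A - 1) / 2"
    using arg_cong[OF two_mult_choose_two_add_self[of a], of real] unfolding A_def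
    by (simp add: algebra_simps)
  have "A * (A - 1) / 2 * (c - \<delta>) \<le> A * (A - 1) / 2 * ln \<beta>"
    using \<beta> A by (intro mult_left_mono) auto
  moreover have "A * (A - 1) / 2 * (c - \<delta>) = A * (A - 1) * c / 2 - A * (A - 1) * \<delta> / 2"
    by (simp add: field_simps)
  ultimately have first: "real (a choose 2) * ln \<beta> \<ge> A * (A - 1) * c / 2 - 1 / 2"
    using \<delta> unfolding half A_def by linarith
  have "K + 1 \<le> 2 * x / A"
    using K x A unfolding A_def by (simp add: field_simps)
  hence "ln (K + 1) \<le> ln (2 * x / A)"
    using K by simp
  also have "\<dots> = ln 2 + ln x - ln A"
    using x0 A by (simp add: ln_div ln_mult)
  finally have "ln (K + 1) \<le> ln 2 + ln x - ln A" .
  hence last: "(A + 1) * ln (K + 1) \<le> (A + 1) * (ln 2 + ln x - ln A)"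
    using A by (intro mult_left_mono) auto
  have "ln (\<beta> ^ (a choose 2) * real a ^ (a - 1) / (K + 1) ^ (a + 1))
          = ln (\<beta> ^ (a choose 2)) + ln (real a ^ (a - 1)) - ln ((K + 1) ^ (a + 1))"
    using \<beta> a K by (simp add: ln_div ln_mult)
  also have "\<dots> = real (a choose 2) * ln \<beta> + (A - 1) * ln A - (A + 1) * ln (K + 1)"
    using \<beta> a K unfolding A_def by (simp add: ln_realpow of_nat_diff del: power_Suc)
  finally have ln_eq: "ln (\<beta> ^ (a choose 2) * real a ^ (a - 1) / (K + 1) ^ (a + 1))
      = real (a choose 2) * ln \<beta> + (A - 1) * ln A - (A + 1) * ln (K + 1)" .
  have "real a * ((real a - 1) * c / 2 + 2 * ln (real a) - ln x - ln 2) - ln x - ln 2 - 1 / 2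
          = (A * (A - 1) * c / 2 - 1 / 2) + (A - 1) * ln A - (A + 1) * (ln 2 + ln x - ln A)"
    unfolding A_def by (simp add: algebra_simps)
  thus ?thesis using ln_eq first last by linarith
qed

lemma m_of_less_choose_two:
  assumes "0 < p" "p < 1" "n \<ge> 2"
  shows "m_of p n < n choose 2"
proof -
  have "real (n choose 2) > 0" using assms(3) by simp
  hence "p * real (n choose 2) < real (n choose 2)" using assms(2) by simp
  thus ?thesis using m_of_bounds(1)[of p n] assms(1) by linarith
qed

lemma ln_choose_two_div_diff_m_of_ge:
  assumes "0 < p" "p < 1" "n \<ge> 2"
  shows "ln (1 / (1 - p)) - 1 / ((1 - p) * real (n choose 2))
           \<le> ln (real (n choose 2) / real ((n choose 2) - m_of p n))"
  using ln_div_diff_ge[of p "real (n choose 2)" "real (m_of p n)"] m_of_bounds[of p n]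
    m_of_less_choose_two[OF assms] assms
  by (simp add: of_nat_diff)

lemma inner_pairs_add_m_of_le_choose_two:
  assumes "0 \<le> p" and k: "k > 0" and a: "real (n div k) \<le> (1 - p) * (real n - 1)"
  shows "inner_pairs k (n div k) (n mod k) + m_of p n \<le> n choose 2"
proof -
  have "2 * real (inner_pairs k (n div k) (n mod k)) \<le> real (n div k) * real n"
    using two_inner_pairs_le[of "n mod k" k "n div k"] k by (simp flip: of_nat_mult)
  also have "\<dots> \<le> (1 - p) * (real n - 1) * real n"
    using a by (intro mult_right_mono) auto
  finally have "real (inner_pairs k (n div k) (n mod k)) + real (m_of p n) \<le> real (n choose 2)"
    using m_of_bounds(1)[OF assms(1), of n] unfolding real_choose_two by (simp add: algebra_simps)
  thus ?thesis by (metis of_nat_add of_nat_le_iff)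
qed

lemma mu_bar_succ_ratio_ge_exp:
  fixes p :: real and n k :: nat
  defines "A \<equiv> real (n div k)" and "x \<equiv> real n" and "c \<equiv> ln (1 / (1 - p))"
  assumes p: "0 < p" "p < 1" and k: "k > 0" and n: "n \<ge> 2"
    and A: "1 \<le> A" "A ^ 2 \<le> real k + 1" "A \<le> (1 - p) * (x - 1)"
      "A ^ 2 \<le> (1 - p) * (x * (x - 1) / 2)"
  shows "exp (A * ((A - 1) * c / 2 + 2 * ln A - ln x - ln 2) - ln x - ln 2 - 1 / 2)
           \<le> mu_bar p n (k + 1) / mu_bar p n k"
proof -
  define a where "a = n div k"
  define N where "N = n choose 2"
  define \<beta> where "\<beta> = real N / real (N - m_of p n)"
  have a: "a \<ge> 1" "a * a \<le> k + 1"
    using A unfolding A_def a_def by (simp_all add: power2_eq_square flip: of_nat_mult)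
  have mN: "m_of p n < N" unfolding N_def using m_of_less_choose_two[OF p n] .
  have "A * (A - 1) \<le> A ^ 2" using A(1) by (simp add: power2_eq_square algebra_simps)
  hence "A * (A - 1) \<le> (1 - p) * real N"
    using A(4) unfolding N_def real_choose_two x_def by linarith
  moreover have "(1 - p) * real N > 0" using p mN by simp
  ultimately have "A * (A - 1) * (1 / ((1 - p) * real N)) \<le> 1" by simp
  moreover have "\<beta> > 0" unfolding \<beta>_def using mN by simp
  moreover have "real k * A \<le> x"
    unfolding A_def x_def by (simp flip: of_nat_mult)
  moreover have "(1 - p) * (x - 1) \<le> x - 1"
    using p n unfolding x_def by (intro mult_left_le_one_le) auto
  hence "A \<le> x" using A(3) by linarith
  ultimately have "A * ((A - 1) * c / 2 + 2 * ln A - ln x - ln 2) - ln x - ln 2 - 1 / 2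
      \<le> ln (\<beta> ^ (a choose 2) * real a ^ (a - 1) / (real k + 1) ^ (a + 1))"
    using ln_ratio_term_ge[of a \<beta> c "1 / ((1 - p) * real N)" "real k" x] a(1) k
      ln_choose_two_div_diff_m_of_ge[OF p n]
    unfolding A_def a_def \<beta>_def N_def c_def by (simp add: mult.commute)
  hence "exp (A * ((A - 1) * c / 2 + 2 * ln A - ln x - ln 2) - ln x - ln 2 - 1 / 2)
      \<le> \<beta> ^ (a choose 2) * real a ^ (a - 1) / (real k + 1) ^ (a + 1)"
    using \<open>\<beta> > 0\<close> a(1) by (subst (asm) ln_ge_iff) simp_all
  also have "\<dots> \<le> mu_bar p n (k + 1) / mu_bar p n k"
    using mu_bar_succ_ratio_ge[OF k a[unfolded a_def], of p] mN
      inner_pairs_add_m_of_le_choose_two[of p k n] p k A(3)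
    unfolding a_def \<beta>_def N_def A_def x_def by (simp add: add.commute)
  finally show ?thesis .
qed

lemma log_scale_gain_ge:
  fixes c M x A :: real
  defines "L \<equiv> ln x / c"
  assumes c: "c > 0" and L: "L \<ge> 1" and lnL: "4 * ln 2 + (M + 6) * c \<le> ln L"
    and lnx: "2 \<le> ln x" and lnlnx: "2 * ln c \<le> ln (ln x)"
    and A: "L \<le> A" "2 * L - 2 * ln L / c - 2 * ln 2 / c - M - 1 \<le> A"
  shows "ln x * ln (ln x) / (4 * c)
      \<le> A * ((A - 1) * c / 2 + 2 * ln A - ln x - ln 2) - ln x - ln 2 - 1 / 2"
proof -
  have lnx_eq: "ln x = c * L" unfolding L_def using c by simp
  have "ln x - ln L - ln 2 - (M + 2) * c / 2
      = (2 * L - 2 * ln L / c - 2 * ln 2 / c - M - 2) * c / 2"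
    using c unfolding lnx_eq by (simp add: field_simps)
  also have "\<dots> \<le> (A - 1) * c / 2"
    using A(2) c by (intro divide_right_mono mult_right_mono) auto
  finally have "ln x - ln L - ln 2 - (M + 2) * c / 2 \<le> (A - 1) * c / 2" .
  moreover have "ln A \<ge> ln L" using A(1) L by simp
  ultimately have B: "(A - 1) * c / 2 + 2 * ln A - ln x - ln 2 \<ge> ln L / 2 + 2 * c"
    using lnL distrib_right[of M 2 c] distrib_right[of M 6 c] by linarith
  have "ln L \<ge> 0" using L by simp
  have "ln x * ln L / (2 * c) + 2 * ln x = L * (ln L / 2 + 2 * c)"
    using c unfolding lnx_eq by (simp add: field_simps)
  also have "\<dots> \<le> A * ((A - 1) * c / 2 + 2 * ln A - ln x - ln 2)"
    using \<open>ln L \<ge> 0\<close> A(1) B L c by (intro mult_mono) auto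
  finally have "A * ((A - 1) * c / 2 + 2 * ln A - ln x - ln 2) - ln x - ln 2 - 1 / 2
      \<ge> ln x * ln L / (2 * c)"
    using lnx ln_2_less_1 by linarith
  moreover have "ln L = ln (ln x) - ln c"
    unfolding L_def using lnx c by (simp add: ln_div)
  hence "ln x * (ln (ln x) / 2) / (2 * c) \<le> ln x * ln L / (2 * c)"
    using lnlnx lnx c by (intro divide_right_mono mult_left_mono) auto
  hence "ln x * ln (ln x) / (4 * c) \<le> ln x * ln L / (2 * c)"
    by (simp add: field_simps)
  ultimately show ?thesis by linarith
qed

lemma near_log_scale_bounds:
  fixes c M L x K A :: real
  defines "g \<equiv> 2 * L - 2 * ln L / c - 2 * ln 2 / c"
  assumes c: "c > 0" and L: "1 \<le> L" "M \<le> L" "2 * ln 2 / c + M + 1 \<le> L - 2 * ln L / c"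
    and A: "A \<le> x / K" "x / K < A + 1" and near: "\<bar>x / K - g\<bar> \<le> M"
  shows "L \<le> A" "A \<le> 3 * L" "g - M - 1 \<le> A"
proof -
  show "g - M - 1 \<le> A" using A near by linarith
  thus "L \<le> A" using L(3) unfolding g_def by linarith
  have "0 \<le> ln L / c" "0 \<le> ln 2 / c" using L(1) c by simp_all
  thus "A \<le> 3 * L" using A near L(2) unfolding g_def by linarith
qed

lemma cubic_scale_bounds:
  fixes p L A x K :: real
  assumes p: "0 < p" "p < 1" and L: "1 \<le> L" "L \<le> A" "A \<le> 3 * L"
    and x: "36 * L ^ 3 \<le> (1 - p) * x" "3 \<le> x" and K: "x < K * (A + 1)"
  shows "A ^ 2 \<le> K + 1" and "A \<le> (1 - p) * (x - 1)" and "A ^ 2 \<le> (1 - p) * (x * (x - 1) / 2)"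
proof -
  have "A ^ 2 \<le> (3 * L) ^ 2" using L by (intro power_mono) auto
  hence sq: "A ^ 2 \<le> 9 * L ^ 2" by (simp add: power_mult_distrib)
  also have "\<dots> \<le> 9 * L ^ 3" using L(1) by (simp add: power_increasing)
  finally have A2: "A ^ 2 \<le> 9 * L ^ 3" .
  have "A ^ 2 * (A + 1) \<le> 9 * L ^ 2 * (4 * L)"
    using sq L by (intro mult_mono) auto
  also have "\<dots> = 36 * L ^ 3" by (simp add: power2_eq_square power3_eq_cube)
  also have "\<dots> \<le> x"
    using x p mult_left_le_one_le[of x "1 - p"] by linarith
  finally have "A ^ 2 * (A + 1) < K * (A + 1)" using K by linarith
  thus "A ^ 2 \<le> K + 1" using L by (simp add: mult_less_cancel_right)
  have "3 * L \<le> 3 * L ^ 3" using L(1) by (simp add: power_increasing[of 1 3 L, simplified])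
  moreover have "(1 - p) * x / 12 \<le> (1 - p) * (x - 1)"
    using mult_left_mono[of "x / 12" "x - 1" "1 - p"] p x(2) by simp
  ultimately show "A \<le> (1 - p) * (x - 1)" using L(3) x(1) by linarith
  have "x / 4 \<le> x * (x - 1) / 2" using x(2) by (simp add: field_simps)
  hence "(1 - p) * x / 4 \<le> (1 - p) * (x * (x - 1) / 2)"
    using mult_left_mono[of "x / 4" "x * (x - 1) / 2" "1 - p"] p by simp
  thus "A ^ 2 \<le> (1 - p) * (x * (x - 1) / 2)" using A2 x(1) by linarith
qed

definition large_scale :: "real \<Rightarrow> real \<Rightarrow> real \<Rightarrow> bool" where
  "large_scale p M x \<longleftrightarrow>
     (let c = ln (1 / (1 - p)); L = ln x / c in
        1 \<le> L \<and> M \<le> L \<and> 2 * ln 2 / c + M + 1 \<le> L - 2 * ln L / c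
        \<and> 36 * L ^ 3 \<le> (1 - p) * x \<and> 2 \<le> ln x
        \<and> 4 * ln 2 + (M + 6) * c \<le> ln L \<and> 2 * ln c \<le> ln (ln x))"

lemma eventually_large_scale:
  assumes "0 < p" "p < 1"
  shows "\<forall>\<^sub>F x in at_top. large_scale p M x"
proof -
  define c where "c = ln (1 / (1 - p))"
  have "c > 0" "1 - p > 0" unfolding c_def using assms by simp_all
  thus ?thesis
    unfolding large_scale_def Let_def c_def[symmetric] by (intro eventually_conj; real_asymp)
qed

lemma mu_bar_succ_ratio_ge_large_scale:
  fixes p M :: real and n k :: nat
  defines "c \<equiv> ln (1 / (1 - p))" and "x \<equiv> real n"
  assumes p: "0 < p" "p < 1" and k: "k > 0" and large: "large_scale p M x"
    and near: "\<bar>x / real k - (2 * (ln x / c) - 2 * ln (ln x / c) / c - 2 * ln 2 / c)\<bar> \<le> M"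
  shows "exp (1 / (4 * c) * ln x * ln (ln x)) \<le> mu_bar p n (k + 1) / mu_bar p n k"
proof -
  define L where "L = ln x / c"
  define A where "A = real (n div k)"
  have c: "c > 0" unfolding c_def using p by simp
  have L: "1 \<le> L" "M \<le> L" "2 * ln 2 / c + M + 1 \<le> L - 2 * ln L / c"
      "36 * L ^ 3 \<le> (1 - p) * x"
    and lnx: "2 \<le> ln x" and lnL: "4 * ln 2 + (M + 6) * c \<le> ln L"
    and lnlnx: "2 * ln c \<le> ln (ln x)"
    using large unfolding large_scale_def Let_def c_def[symmetric] L_def[symmetric] by auto
  have "A = of_int \<lfloor>x / real k\<rfloor>"
    unfolding A_def x_def floor_divide_of_nat_eq by simp
  hence A_floor: "A \<le> x / real k" "x / real k < A + 1" by simp_all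
  note A = near_log_scale_bounds[OF c L(1-3) A_floor near[folded L_def]]
  have "x > 0" using lnx unfolding x_def by (cases n) auto
  hence "exp 2 \<le> x" using lnx by (subst (asm) ln_ge_iff)
  hence x3: "3 \<le> x" using exp_ge_add_one_self[of 2] by simp
  have "x < real k * (A + 1)"
    using A_floor(2) k by (simp add: field_simps)
  note cubic = cubic_scale_bounds[OF p L(1) A(1,2) L(4) x3 this]
  have "n \<ge> 2" using x3 unfolding x_def by simp
  have "exp (1 / (4 * c) * ln x * ln (ln x)) \<le>
      exp (A * ((A - 1) * c / 2 + 2 * ln A - ln x - ln 2) - ln x - ln 2 - 1 / 2)"
    using log_scale_gain_ge[OF c L(1)[unfolded L_def] lnL[unfolded L_def] lnx lnlnx A(1,3)[unfolded L_def]]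
    by simp
  also have "\<dots> \<le> mu_bar p n (k + 1) / mu_bar p n k"
    using mu_bar_succ_ratio_ge_exp[OF p k \<open>n \<ge> 2\<close>] A(1) L(1) cubic
    unfolding A_def x_def c_def by simp
  finally show ?thesis .
qed

theorem lemma3:
  fixes p b :: real and gamma :: "nat \<Rightarrow> real" and k :: "nat \<Rightarrow> nat"
  assumes "0 < p" and "p < 1 - 1 / exp 2"
    and "b = 1 / (1 - p)"
    and "\<And>n. gamma n = 2 * log b (real n) - 2 * log b (log b (real n)) - 2 * log b 2"
    and "\<And>n. k n > 0"
    and "(\<lambda>n. real n / real (k n) - gamma n) \<in> O(\<lambda>_. 1)"
  shows "\<exists>C>0. \<forall>\<^sub>F n in at_top.
           mu_bar p n (k n + 1) / mu_bar p n (k n) \<ge> exp (C * ln (real n) * ln (ln (real n)))"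
proof -
  have "0 < 1 / exp (2::real)" by simp
  hence p: "0 < p" "p < 1" using assms(1,2) by linarith+
  define c where "c = ln (1 / (1 - p))"
  have "c > 0" unfolding c_def using p by simp
  have gamma: "gamma n = 2 * (ln (real n) / c) - 2 * ln (ln (real n) / c) / c - 2 * ln 2 / c" for n
    unfolding assms(4) log_def c_def assms(3) by simp
  obtain M where "\<forall>\<^sub>F n in at_top. norm (real n / real (k n) - gamma n) \<le> M * norm (1::real)"
    using landau_o.bigE[OF assms(6)] by blast
  moreover have "\<forall>\<^sub>F n in at_top. large_scale p M (real n)"
    using eventually_large_scale[OF p] filterlim_real_sequentially
    by (rule eventually_compose_filterlim)
  ultimately have "\<forall>\<^sub>F n in at_top. mu_bar p n (k n + 1) / mu_bar p n (k n)
      \<ge> exp (1 / (4 * c) * ln (real n) * ln (ln (real n)))"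
  proof eventually_elim
    case (elim n)
    thus ?case
      using mu_bar_succ_ratio_ge_large_scale[OF p assms(5), of M n, folded c_def] gamma[of n]
      by simp
  qed
  thus ?thesis using \<open>c > 0\<close> by (intro exI[of _ "1 / (4 * c)"]) simp
qed

end
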